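(* Let $P$ be an isothetic drawing of the Horton set of $n=2^k$ points with tree $T$, and let $1\le l\le k-1$. Let $P'$ be the result of pruning the $l$-th level of $T$ (see context). Then: (1) $P'$ is an isothetic drawing of the Horton set of $n/2$ points. (2) Suppose $l\le k-3$, and let $T'$ be the tree associated to $P'$. Let $Q'$ be a vertex of the $l'$-th level of $T'$ for some $l'>l$. Then there exists a vertex $Q$ in the $(l'+1)$-th level of $T$ with $Q'\subseteq Q$; moreover, whenever $S(Q')$ is defined (i.e. $Q'$ is not the root of $T'$ and has more than two points), $S(Q')\subseteq S(Q)$.
   Context: For a finite set $S$ of points in the plane with pairwise distinct $x$-coordinates, list its points in increasing order of $x$-coordinate as $p_0,\dots,p_{|S|-1}$ and set $S_{\mathrm{even}}=\{p_0,p_2,\dots\}$, $S_{\mathrm{odd}}=\{p_1,p_3,\dots\}$. For point sets $X,Y$, $X$ is high above $Y$ if every line through two points of $X$ lies strictly above every point of $Y$ and every line through two points of $Y$ lies strictly below every point of $X$. A Horton set of $2^k$ points is defined recursively: a set $H$ of $2^k$ points, no three collinear, with pairwise distinct $x$-coordinates, such that for $k=0$ it is a single point and for $k\ge1$ both $H_{\mathrm{even}}$ and $H_{\mathrm{odd}}$ are Horton sets of $2^{k-1}$ points and $H_{\mathrm{odd}}$ is high above $H_{\mathrm{even}}$. An isothetic drawing of the Horton set of $n=2^k$ points is a Horton set of $n$ points all of whose points have integer coordinates. For such a $P$, the tree $T$ is the complete rooted binary tree with root $P$ in which every vertex $Q$ with at least two points has left child $Q_{\mathrm{even}}$ and right child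 $Q_{\mathrm{odd}}$; the $i$-th level of $T$ is the set of its vertices consisting of exactly $2^i$ points. Pruning the $l$-th level of $T$ means removing from $P$ all points belonging to the vertices of the $l$-th level that are left children of their parent, or alternatively all points belonging to the vertices of the $l$-th level that are right children of their parent (either choice). For a non-root vertex $Q$ with more than two points, $S(Q)$ denotes the right child of $Q$ if $Q$ is the left child of its parent, and the left child of $Q$ otherwise (and analogously in $T'$). *)

theory Defs
  imports Main
begin

definition rank_x :: "('a::linorder \<times> 'b) set \<Rightarrow> ('a \<times> 'b) \<Rightarrow> nat" where
  "rank_x S p = card {q \<in> S. fst q < fst p}"

definition evens :: "('a::linorder \<times> 'b) set \<Rightarrow> ('a \<times> 'b) set" where
  "evens S = {p \<in> S. even (rank_x S p)}"

definition odds :: "('a::linorder \<times> 'b) set \<Rightarrow> ('a \<times> 'b) set" where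
  "odds S = {p \<in> S. odd (rank_x S p)}"

(* r lies strictly below the (non-vertical) line through p and q, where fst p < fst q *)
definition below_line :: "('a::linordered_idom \<times> 'a) \<Rightarrow> ('a \<times> 'a) \<Rightarrow> ('a \<times> 'a) \<Rightarrow> bool" where
  "below_line p q r \<longleftrightarrow>
     (fst q - fst p) * (snd r - snd p) < (snd q - snd p) * (fst r - fst p)"

definition above_line :: "('a::linordered_idom \<times> 'a) \<Rightarrow> ('a \<times> 'a) \<Rightarrow> ('a \<times> 'a) \<Rightarrow> bool" where
  "above_line p q r \<longleftrightarrow>
     (fst q - fst p) * (snd r - snd p) > (snd q - snd p) * (fst r - fst p)"

definition collinear3 :: "('a::linordered_idom \<times> 'a) \<Rightarrow> ('a \<times> 'a) \<Rightarrow> ('a \<times> 'a) \<Rightarrow> bool" where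
  "collinear3 p q r \<longleftrightarrow>
     (fst q - fst p) * (snd r - snd p) = (snd q - snd p) * (fst r - fst p)"

definition no_three_collinear :: "('a::linordered_idom \<times> 'a) set \<Rightarrow> bool" where
  "no_three_collinear S \<longleftrightarrow>
     (\<forall>p\<in>S. \<forall>q\<in>S. \<forall>r\<in>S. p \<noteq> q \<and> p \<noteq> r \<and> q \<noteq> r \<longrightarrow> \<not> collinear3 p q r)"

definition high_above :: "('a::linordered_idom \<times> 'a) set \<Rightarrow> ('a \<times> 'a) set \<Rightarrow> bool" where
  "high_above X Y \<longleftrightarrow>
     (\<forall>p\<in>X. \<forall>q\<in>X. fst p < fst q \<longrightarrow> (\<forall>r\<in>Y. below_line p q r)) \<and>
     (\<forall>p\<in>Y. \<forall>q\<in>Y. fst p < fst q \<longrightarrow> (\<forall>r\<in>X. above_line p q r))"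

fun horton :: "nat \<Rightarrow> ('a::linordered_idom \<times> 'a) set \<Rightarrow> bool" where
  "horton 0 H \<longleftrightarrow> finite H \<and> card H = 1"
| "horton (Suc k) H \<longleftrightarrow>
     finite H \<and> card H = 2 ^ Suc k \<and> no_three_collinear H \<and> inj_on fst H \<and>
     horton k (evens H) \<and> horton k (odds H) \<and> high_above (odds H) (evens H)"

definition isothetic_horton :: "nat \<Rightarrow> (int \<times> int) set \<Rightarrow> bool" where
  "isothetic_horton k P \<longleftrightarrow> horton k P"

inductive_set tree_vertices :: "('a::linorder \<times> 'b) set \<Rightarrow> ('a \<times> 'b) set set"
  for P :: "('a \<times> 'b) set" where
  root: "P \<in> tree_vertices P"
| left: "Q \<in> tree_vertices P \<Longrightarrow> card Q \<ge> 2 \<Longrightarrow> evens Q \<in> tree_vertices P"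
| right: "Q \<in> tree_vertices P \<Longrightarrow> card Q \<ge> 2 \<Longrightarrow> odds Q \<in> tree_vertices P"

definition tree_level :: "('a::linorder \<times> 'b) set \<Rightarrow> nat \<Rightarrow> ('a \<times> 'b) set set" where
  "tree_level P i = {Q \<in> tree_vertices P. card Q = 2 ^ i}"

definition is_left_child :: "('a::linorder \<times> 'b) set \<Rightarrow> ('a \<times> 'b) set \<Rightarrow> bool" where
  "is_left_child P Q \<longleftrightarrow> (\<exists>R \<in> tree_vertices P. card R \<ge> 2 \<and> Q = evens R)"

definition is_right_child :: "('a::linorder \<times> 'b) set \<Rightarrow> ('a \<times> 'b) set \<Rightarrow> bool" where
  "is_right_child P Q \<longleftrightarrow> (\<exists>R \<in> tree_vertices P. card R \<ge> 2 \<and> Q = odds R)"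

definition prune_left :: "('a::linorder \<times> 'b) set \<Rightarrow> nat \<Rightarrow> ('a \<times> 'b) set" where
  "prune_left P l = P - \<Union>{Q \<in> tree_level P l. is_left_child P Q}"

definition prune_right :: "('a::linorder \<times> 'b) set \<Rightarrow> nat \<Rightarrow> ('a \<times> 'b) set" where
  "prune_right P l = P - \<Union>{Q \<in> tree_level P l. is_right_child P Q}"

(* S(Q) in the tree with root P (meaningful for non-root Q with more than two points):
   the right child of Q if Q is a left child of its parent, the left child of Q otherwise *)
definition S_vertex :: "('a::linorder \<times> 'b) set \<Rightarrow> ('a \<times> 'b) set \<Rightarrow> ('a \<times> 'b) set" where
  "S_vertex P Q = (if is_left_child P Q then odds Q else evens Q)"

end

theory Submission
  imports Defs
begin

text \<open>Enumerate P by increasing x-coordinate as f 0, \<dots>, f (2^k - 1). Taking even or odd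
  ranks halves a residue class of indices, so the vertices of T at depth d are exactly the
  classes {f j | j mod 2^d = r}, and such a vertex is a left child iff bit d - 1 of r is 0.
  Pruning level l therefore deletes the indices whose bit e = k - 1 - l has one fixed value;
  the surviving indices are enumerated increasingly by inserting the other value at bit e.
  Being Horton passes to such a subset by induction on e: for e > 0 the even and odd halves of
  the subset are subsets of the same shape inside the even and odd halves of P. Inserting a
  bit at position e keeps residues modulo 2^d for d \<le> e, so every vertex of T' at depth
  d < e, and each of its children, lies in the vertex of T of the same depth and residue.\<close>

abbreviation x_sorted :: "(nat \<Rightarrow> 'a::linorder \<times> 'b) \<Rightarrow> nat \<Rightarrow> bool" where
  "x_sorted f n \<equiv> strict_mono_on {..<n} (\<lambda>i. fst (f i))"

lemma x_sorted_inj_on: "x_sorted f n \<Longrightarrow> inj_on f {..<n}"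
  using strict_mono_on_imp_inj_on[of "{..<n}" "\<lambda>i. fst (f i)"]
  by (simp add: inj_on_def)

lemma x_sorted_reindex:
  assumes "x_sorted f N" "strict_mono h" "h ` {..<n} \<subseteq> {..<N}"
  shows "x_sorted (\<lambda>t. f (h t)) n"
  using monotone_on_o[OF assms(1) monotone_on_subset[OF assms(2), of "{..<n}"] assms(3)]
  by (simp add: comp_def)

lemma rank_x_sorted:
  assumes "x_sorted f n" "j < n"
  shows "rank_x (f ` {..<n}) (f j) = j"
proof -
  have "{q \<in> f ` {..<n}. fst q < fst (f j)} = f ` {..<j}"
    using strict_mono_on_less[OF assms(1)] assms(2) by auto
  moreover have "inj_on f {..<j}"
    using x_sorted_inj_on[OF assms(1)] assms(2) by (auto intro: inj_on_subset)
  ultimately show ?thesis unfolding rank_x_def by (simp add: card_image)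
qed

lemma evens_x_sorted:
  assumes "x_sorted f (2 * n)"
  shows "evens (f ` {..<2 * n}) = (\<lambda>t. f (2 * t)) ` {..<n}"
proof -
  have "evens (f ` {..<2 * n}) = f ` {j. j < 2 * n \<and> even j}"
    unfolding evens_def using rank_x_sorted[OF assms] by auto
  also have "{j. j < 2 * n \<and> even j} = (\<lambda>t. 2 * t) ` {..<n}"
    by (auto elim!: evenE)
  finally show ?thesis by (simp add: image_image)
qed

lemma odds_x_sorted:
  assumes "x_sorted f (2 * n)"
  shows "odds (f ` {..<2 * n}) = (\<lambda>t. f (2 * t + 1)) ` {..<n}"
proof -
  have "odds (f ` {..<2 * n}) = f ` {j. j < 2 * n \<and> odd j}"
    unfolding odds_def using rank_x_sorted[OF assms] by auto
  also have "{j. j < 2 * n \<and> odd j} = (\<lambda>t. 2 * t + 1) ` {..<n}"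
    by (auto elim!: oddE)
  finally show ?thesis by (simp add: image_image)
qed

lemma obtain_x_sorted_enumeration:
  fixes P :: "('a::linorder \<times> 'b) set"
  assumes "finite P" "inj_on fst P"
  obtains f where "x_sorted f (card P)" "P = f ` {..<card P}"
proof -
  define xs where "xs = sorted_list_of_set (fst ` P)"
  have len: "length xs = card P" unfolding xs_def using assms by (simp add: card_image)
  have set_xs: "set xs = fst ` P" unfolding xs_def using assms by simp
  define f where "f i = inv_into P fst (xs ! i)" for i
  have f: "f i \<in> P" "fst (f i) = xs ! i" if "i < card P" for i
    unfolding f_def using that len set_xs by (metis f_inv_into_f inv_into_into nth_mem)+
  have "x_sorted f (card P)"
  proof (rule strict_mono_onI)
    fix i j assume "i \<in> {..<card P}" "j \<in> {..<card P}" "i < j"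
    then show "fst (f i) < fst (f j)"
      using f len sorted_wrt_nth_less[of "(<)" xs] unfolding xs_def by auto
  qed
  moreover have "P \<subseteq> f ` {..<card P}"
  proof
    fix p assume p: "p \<in> P"
    then obtain i where i: "i < length xs" "xs ! i = fst p"
      using set_xs by (metis image_eqI in_set_conv_nth)
    then have "f i = p" unfolding f_def using p assms(2) by (simp add: inv_into_f_f)
    then show "p \<in> f ` {..<card P}" using i len by auto
  qed
  ultimately show thesis using that f(1) by blast
qed

text \<open>Shifts the bits of j at positions \<ge> e up by one and puts b at position e.\<close>

definition insert_bit :: "nat \<Rightarrow> bool \<Rightarrow> nat \<Rightarrow> nat" where
  "insert_bit e b j = j + 2 ^ e * (j div 2 ^ e + of_bool b)"

lemma strict_mono_insert_bit: "strict_mono (insert_bit e b)"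
  by (rule strict_monoI) (simp add: insert_bit_def add_less_le_mono div_le_mono)

lemma insert_bit_0: "insert_bit 0 b j = 2 * j + of_bool b"
  by (simp add: insert_bit_def)

lemma insert_bit_Suc_double: "insert_bit (Suc e) b (2 * t) = 2 * insert_bit e b t"
  by (simp add: insert_bit_def div_mult2_eq)

lemma insert_bit_Suc_double_Suc:
  "insert_bit (Suc e) b (Suc (2 * t)) = Suc (2 * insert_bit e b t)"
proof -
  have "Suc (2 * t) div (2 * 2 ^ e) = t div 2 ^ e"
    by (simp add: div_mult2_eq)
  then show ?thesis by (simp add: insert_bit_def)
qed

lemma insert_bit_eq: "insert_bit e b j = j mod 2 ^ e + 2 ^ e * (of_bool b + 2 * (j div 2 ^ e))"
proof -
  have "j = j mod 2 ^ e + 2 ^ e * (j div 2 ^ e)" by simp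
  then show ?thesis unfolding insert_bit_def by (simp add: algebra_simps)
qed

lemma insert_bit_div: "insert_bit e b j div 2 ^ e = of_bool b + 2 * (j div 2 ^ e)"
  unfolding insert_bit_eq by simp

lemma insert_bit_mod: "d \<le> e \<Longrightarrow> insert_bit e b j mod 2 ^ d = j mod 2 ^ d"
  unfolding insert_bit_eq
  by (simp add: mod_mod_cancel le_imp_power_dvd flip: mod_add_right_eq mult.assoc)

lemma bit_insert_bit: "bit (insert_bit e b j) e = b"
  by (simp add: bit_iff_odd insert_bit_div)

lemma insert_bit_less:
  assumes "j < 2 ^ m" "e < m"
  shows "insert_bit e b j < 2 ^ Suc m"
proof -
  have "insert_bit e b j div 2 ^ Suc e = j div 2 ^ e"
    by (simp add: insert_bit_div div_mult2_eq mult.commute[of 2])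
  also have "\<dots> < 2 ^ (m - e)"
    using assms by (simp add: div_less_iff_less_mult flip: power_add)
  finally have "insert_bit e b j div 2 ^ Suc e < 2 ^ (m - e)" .
  moreover have "m - e + Suc e = Suc m" using assms by simp
  ultimately show ?thesis
    by (metis div_less_iff_less_mult power_add zero_less_numeral zero_less_power)
qed

lemma insert_bit_image:
  assumes "e < m"
  shows "insert_bit e b ` {..<2 ^ m} = {i. i < 2 ^ Suc m \<and> bit i e = b}"
proof (intro equalityI subsetI)
  fix i assume "i \<in> insert_bit e b ` {..<2 ^ m}"
  then show "i \<in> {i. i < 2 ^ Suc m \<and> bit i e = b}"
    using insert_bit_less[OF _ assms] bit_insert_bit by auto
next
  fix i :: nat assume i: "i \<in> {i. i < 2 ^ Suc m \<and> bit i e = b}"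
  define j where "j = i mod 2 ^ e + 2 ^ e * (i div 2 ^ Suc e)"
  have j_div: "j div 2 ^ e = i div 2 ^ Suc e" and j_mod: "j mod 2 ^ e = i mod 2 ^ e"
    unfolding j_def by simp_all
  have "i div 2 ^ e mod 2 = of_bool b"
    using i by (auto simp: bit_iff_odd odd_iff_mod_2_eq_one even_iff_mod_2_eq_zero)
  then have "i div 2 ^ e = of_bool b + 2 * (i div 2 ^ Suc e)"
    by (metis div_mult2_eq div_mult_mod_eq power_Suc2 add.commute mult.commute)
  then have "insert_bit e b j = i"
    unfolding insert_bit_eq j_div j_mod by (metis mod_mult_div_eq)
  moreover have "j < 2 ^ m"
  proof -
    have "Suc m = m - e + Suc e" "m = m - e + e" using assms by simp_all
    then have "i div 2 ^ Suc e < 2 ^ (m - e)"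
      using i
      by (metis div_less_iff_less_mult mem_Collect_eq power_add zero_less_numeral zero_less_power)
    then show ?thesis
      using j_div \<open>m = m - e + e\<close>
      by (metis div_less_iff_less_mult power_add zero_less_numeral zero_less_power)
  qed
  ultimately show "i \<in> insert_bit e b ` {..<2 ^ m}" by blast
qed

lemma no_three_collinear_subset:
  "no_three_collinear X \<Longrightarrow> Y \<subseteq> X \<Longrightarrow> no_three_collinear Y"
  unfolding no_three_collinear_def by blast

lemma high_above_subset:
  "high_above X Y \<Longrightarrow> X' \<subseteq> X \<Longrightarrow> Y' \<subseteq> Y \<Longrightarrow> high_above X' Y'"
  unfolding high_above_def by blast

lemma horton_Suc_subset:
  assumes H: "horton (Suc n) H" and "G \<subseteq> H" "card G = 2 ^ Suc m"
    and "horton m (evens G)" "horton m (odds G)"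
    and "evens G \<subseteq> evens H" "odds G \<subseteq> odds H"
  shows "horton (Suc m) G"
proof -
  have "finite H" "no_three_collinear H" "inj_on fst H" "high_above (odds H) (evens H)"
    using H by simp_all
  then have "finite G" "no_three_collinear G" "inj_on fst G" "high_above (odds G) (evens G)"
    using assms(2,6,7)
    by (auto elim: finite_subset no_three_collinear_subset inj_on_subset high_above_subset)
  then show ?thesis using assms(3-5) by simp
qed

lemma x_sorted_insert_bit:
  assumes "x_sorted f (2 ^ Suc m)" "e < m"
  shows "x_sorted (\<lambda>j. f (insert_bit e b j)) (2 ^ m)"
  using assms(1) strict_mono_insert_bit
  by (rule x_sorted_reindex) (use insert_bit_less assms(2) in auto)

lemma evens_image_insert_bit_Suc:
  assumes "x_sorted f (2 ^ Suc (Suc m))" "e < m"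
  shows "evens ((\<lambda>j. f (insert_bit (Suc e) b j)) ` {..<2 ^ Suc m})
    = (\<lambda>j. f (2 * insert_bit e b j)) ` {..<2 ^ m}"
proof -
  have "x_sorted (\<lambda>j. f (insert_bit (Suc e) b j)) (2 * 2 ^ m)"
    using x_sorted_insert_bit[OF assms(1)] assms(2) by simp
  from evens_x_sorted[OF this] show ?thesis by (simp add: insert_bit_Suc_double)
qed

lemma odds_image_insert_bit_Suc:
  assumes "x_sorted f (2 ^ Suc (Suc m))" "e < m"
  shows "odds ((\<lambda>j. f (insert_bit (Suc e) b j)) ` {..<2 ^ Suc m})
    = (\<lambda>j. f (2 * insert_bit e b j + 1)) ` {..<2 ^ m}"
proof -
  have "x_sorted (\<lambda>j. f (insert_bit (Suc e) b j)) (2 * 2 ^ m)"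
    using x_sorted_insert_bit[OF assms(1)] assms(2) by simp
  from odds_x_sorted[OF this] show ?thesis by (simp add: insert_bit_Suc_double_Suc)
qed

lemma horton_insert_bit:
  fixes f :: "nat \<Rightarrow> 'a::linordered_idom \<times> 'a"
  assumes "horton (Suc m) (f ` {..<2 ^ Suc m})" "x_sorted f (2 ^ Suc m)" "e < m"
  shows "horton m ((\<lambda>j. f (insert_bit e b j)) ` {..<2 ^ m})"
  using assms
proof (induction e arbitrary: m f)
  case 0
  have f: "x_sorted f (2 * 2 ^ m)" using "0.prems"(2) by simp
  have "horton m (evens (f ` {..<2 * 2 ^ m}))" "horton m (odds (f ` {..<2 * 2 ^ m}))"
    using "0.prems"(1) by auto
  then show ?case
    using evens_x_sorted[OF f] odds_x_sorted[OF f] by (cases b) (simp_all add: insert_bit_0)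
next
  case (Suc e)
  obtain m' where m: "m = Suc m'" using Suc.prems(3) by (cases m) auto
  define H where "H = f ` {..<2 ^ Suc m}"
  define G where "G = (\<lambda>j. f (insert_bit (Suc e) b j)) ` {..<2 ^ m}"
  have f: "x_sorted f (2 * 2 ^ m)" using Suc.prems(2) by simp
  have f_even: "x_sorted (\<lambda>t. f (2 * t)) (2 ^ Suc m')"
    and f_odd: "x_sorted (\<lambda>t. f (2 * t + 1)) (2 ^ Suc m')"
    using m by (auto intro!: x_sorted_reindex[OF Suc.prems(2)] strict_monoI)
  have H_even: "evens H = (\<lambda>t. f (2 * t)) ` {..<2 ^ Suc m'}"
    and H_odd: "odds H = (\<lambda>t. f (2 * t + 1)) ` {..<2 ^ Suc m'}"
    unfolding H_def using evens_x_sorted[OF f] odds_x_sorted[OF f] m by simp_all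
  have G_even: "evens G = (\<lambda>j. f (2 * insert_bit e b j)) ` {..<2 ^ m'}"
    and G_odd: "odds G = (\<lambda>j. f (2 * insert_bit e b j + 1)) ` {..<2 ^ m'}"
    unfolding G_def m
    using evens_image_insert_bit_Suc odds_image_insert_bit_Suc Suc.prems(2,3) m by simp_all
  have "horton (Suc m') (evens H)" "horton (Suc m') (odds H)"
    using Suc.prems(1) m unfolding H_def by auto
  then have "horton m' (evens G)" "horton m' (odds G)"
    unfolding G_even G_odd H_even H_odd
    using Suc.IH[OF _ f_even] Suc.IH[OF _ f_odd] m Suc.prems(3) by simp_all
  moreover have "evens G \<subseteq> evens H" "odds G \<subseteq> odds H"
    unfolding G_even G_odd H_even H_odd
    using insert_bit_less[of _ m' e b] m Suc.prems(3) by auto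
  moreover have "G \<subseteq> H"
    using insert_bit_less Suc.prems(3) unfolding H_def G_def by auto
  moreover have "card G = 2 ^ Suc m'"
    using x_sorted_inj_on[OF x_sorted_insert_bit[OF Suc.prems(2,3)]] m
    unfolding G_def by (simp add: card_image)
  ultimately show ?case
    using horton_Suc_subset[where H = H] Suc.prems(1) m unfolding H_def G_def by blast
qed

definition residue_vertex :: "(nat \<Rightarrow> 'p) \<Rightarrow> nat \<Rightarrow> nat \<Rightarrow> nat \<Rightarrow> 'p set" where
  "residue_vertex f k d r = f ` {j. j < 2 ^ k \<and> j mod 2 ^ d = r}"

lemma residue_vertex_0: "residue_vertex f k 0 0 = f ` {..<2 ^ k}"
  by (auto simp: residue_vertex_def)

lemma stride_less:
  assumes "d \<le> k" "r < 2 ^ d" "t < 2 ^ (k - d)"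
  shows "2 ^ d * t + r < (2::nat) ^ k"
proof -
  have "2 ^ d * t + r < 2 ^ d * (t + 1)" using assms by simp
  also have "\<dots> \<le> 2 ^ d * 2 ^ (k - d)" using assms by (intro mult_left_mono) auto
  also have "\<dots> = 2 ^ k" using assms by (simp flip: power_add)
  finally show ?thesis .
qed

lemma residue_vertex_eq_stride:
  assumes "d \<le> k" "r < 2 ^ d"
  shows "residue_vertex f k d r = (\<lambda>t. f (2 ^ d * t + r)) ` {..<2 ^ (k - d)}"
proof -
  have "{j. j < 2 ^ k \<and> j mod 2 ^ d = r} = (\<lambda>t. 2 ^ d * t + r) ` {..<2 ^ (k - d)}"
  proof (intro equalityI subsetI)
    fix j :: nat assume j: "j \<in> {j. j < 2 ^ k \<and> j mod 2 ^ d = r}"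
    then have "j = 2 ^ d * (j div 2 ^ d) + r" using mult_div_mod_eq[of "2 ^ d" j] by simp
    moreover have "j div 2 ^ d < 2 ^ (k - d)"
      using j assms by (simp add: div_less_iff_less_mult flip: power_add)
    ultimately show "j \<in> (\<lambda>t. 2 ^ d * t + r) ` {..<2 ^ (k - d)}" by blast
  qed (use stride_less[OF assms] assms in auto)
  then show ?thesis unfolding residue_vertex_def by (simp add: image_image)
qed

lemma x_sorted_stride:
  assumes "x_sorted f (2 ^ k)" "d \<le> k" "r < 2 ^ d"
  shows "x_sorted (\<lambda>t. f (2 ^ d * t + r)) (2 ^ (k - d))"
  by (rule x_sorted_reindex[OF assms(1)]) (auto intro: strict_monoI stride_less[OF assms(2,3)])

lemma card_residue_vertex:
  assumes "x_sorted f (2 ^ k)" "d \<le> k" "r < 2 ^ d"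
  shows "card (residue_vertex f k d r) = 2 ^ (k - d)"
  unfolding residue_vertex_eq_stride[OF assms(2,3)]
  using x_sorted_inj_on[OF x_sorted_stride[OF assms]] by (simp add: card_image)

lemma evens_residue_vertex:
  assumes "x_sorted f (2 ^ k)" "d < k" "r < 2 ^ d"
  shows "evens (residue_vertex f k d r) = residue_vertex f k (Suc d) r"
proof -
  have k: "(2::nat) ^ (k - d) = 2 * 2 ^ (k - Suc d)"
    using assms(2) by (metis Suc_diff_Suc power_Suc)
  have "x_sorted (\<lambda>t. f (2 ^ d * t + r)) (2 * 2 ^ (k - Suc d))"
    using x_sorted_stride[OF assms(1) _ assms(3)] assms(2) k by simp
  from evens_x_sorted[OF this] show ?thesis
    using assms by (simp add: residue_vertex_eq_stride k mult.assoc mult.left_commute)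
qed

lemma odds_residue_vertex:
  assumes "x_sorted f (2 ^ k)" "d < k" "r < 2 ^ d"
  shows "odds (residue_vertex f k d r) = residue_vertex f k (Suc d) (r + 2 ^ d)"
proof -
  have k: "(2::nat) ^ (k - d) = 2 * 2 ^ (k - Suc d)"
    using assms(2) by (metis Suc_diff_Suc power_Suc)
  have "x_sorted (\<lambda>t. f (2 ^ d * t + r)) (2 * 2 ^ (k - Suc d))"
    using x_sorted_stride[OF assms(1) _ assms(3)] assms(2) k by simp
  from odds_x_sorted[OF this]
  have "odds (residue_vertex f k d r) = (\<lambda>t. f (2 ^ d * (2 * t + 1) + r)) ` {..<2 ^ (k - Suc d)}"
    using assms by (simp add: residue_vertex_eq_stride k)
  also have "\<dots> = residue_vertex f k (Suc d) (r + 2 ^ d)"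
    using assms by (simp add: residue_vertex_eq_stride algebra_simps)
  finally show ?thesis .
qed

lemma residue_vertex_inj:
  assumes f: "x_sorted f (2 ^ k)" and "d \<le> k" "r < 2 ^ d" "d' \<le> k" "r' < 2 ^ d'"
    and eq: "residue_vertex f k d r = residue_vertex f k d' r'"
  shows "d = d' \<and> r = r'"
proof -
  have "(2::nat) ^ (k - d) = 2 ^ (k - d')"
    using card_residue_vertex[OF f assms(2,3)] card_residue_vertex[OF f assms(4,5)] eq by simp
  then have d: "d = d'" using assms(2,4) by simp
  have "(2::nat) ^ d \<le> 2 ^ k" using assms(2) by simp
  then have "r < 2 ^ k" using assms(3) by linarith
  then have "f r \<in> residue_vertex f k d r"
    using assms(3) unfolding residue_vertex_def by simp
  then have "f r \<in> residue_vertex f k d' r'" unfolding eq .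
  then obtain j where j: "j < 2 ^ k" "j mod 2 ^ d' = r'" "f r = f j"
    unfolding residue_vertex_def by blast
  have "r = j"
    using inj_onD[OF x_sorted_inj_on[OF f] j(3)] j(1) \<open>r < 2 ^ k\<close> by simp
  then show ?thesis using d j(2) assms(3) by simp
qed

lemma two_le_card_residue_vertex_iff:
  assumes "x_sorted f (2 ^ k)" "d \<le> k" "r < 2 ^ d"
  shows "2 \<le> card (residue_vertex f k d r) \<longleftrightarrow> d < k"
proof -
  have "2 \<le> (2::nat) ^ (k - d) \<longleftrightarrow> 1 \<le> k - d"
    using power_increasing_iff[of 2 1 "k - d"] by simp
  then show ?thesis using card_residue_vertex[OF assms] assms(2) by auto
qed

lemma tree_vertices_eq:
  assumes f: "x_sorted f (2 ^ k)"
  shows "tree_vertices (f ` {..<2 ^ k})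
    = {residue_vertex f k d r | d r. d \<le> k \<and> r < 2 ^ d}"
proof (intro equalityI subsetI)
  fix Q assume "Q \<in> tree_vertices (f ` {..<2 ^ k})"
  then show "Q \<in> {residue_vertex f k d r | d r. d \<le> k \<and> r < 2 ^ d}"
  proof induction
    case root
    show ?case using residue_vertex_0[of f k] by force
  next
    case (left Q)
    then obtain d r where "Q = residue_vertex f k d r" "d < k" "r < 2 ^ d"
      using two_le_card_residue_vertex_iff[OF f] by auto
    then show ?case using evens_residue_vertex[OF f] by fastforce
  next
    case (right Q)
    then obtain d r where "Q = residue_vertex f k d r" "d < k" "r < 2 ^ d"
      using two_le_card_residue_vertex_iff[OF f] by auto
    moreover have "r + 2 ^ d < 2 ^ Suc d" using \<open>r < 2 ^ d\<close> by simp
    ultimately show ?case using odds_residue_vertex[OF f] by fastforce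
  qed
next
  fix Q assume "Q \<in> {residue_vertex f k d r | d r. d \<le> k \<and> r < 2 ^ d}"
  then obtain d r where Q: "Q = residue_vertex f k d r" "d \<le> k" "r < 2 ^ d" by blast
  have "r < 2 ^ d \<Longrightarrow> d \<le> k
      \<Longrightarrow> residue_vertex f k d r \<in> tree_vertices (f ` {..<2 ^ k})" for r
  proof (induction d arbitrary: r)
    case 0
    then show ?case using residue_vertex_0[of f k] tree_vertices.root by simp
  next
    case (Suc d)
    let ?R = "residue_vertex f k d (r mod 2 ^ d)"
    have R: "?R \<in> tree_vertices (f ` {..<2 ^ k})" "2 \<le> card ?R"
      using Suc two_le_card_residue_vertex_iff[OF f] by simp_all
    show ?case
    proof (cases "r < 2 ^ d")
      case True
      then show ?thesis
        using tree_vertices.left[OF R] evens_residue_vertex[OF f] Suc.prems by simp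
    next
      case False
      moreover have "r - 2 ^ d < 2 ^ d" using Suc.prems(1) by simp
      ultimately have "r = r mod 2 ^ d + 2 ^ d" by (simp add: le_mod_geq)
      then show ?thesis
        using tree_vertices.right[OF R] odds_residue_vertex[OF f, of d "r mod 2 ^ d"] Suc.prems
        by simp
    qed
  qed
  then show "Q \<in> tree_vertices (f ` {..<2 ^ k})" using Q by simp
qed

lemma tree_vertex_with_children:
  assumes f: "x_sorted f (2 ^ k)" and "R \<in> tree_vertices (f ` {..<2 ^ k})" "2 \<le> card R"
  obtains d r where "d < k" "r < 2 ^ d" "R = residue_vertex f k d r"
  using assms two_le_card_residue_vertex_iff[OF f] by (auto simp: tree_vertices_eq)

lemma residue_vertex_in_tree_vertices:
  assumes "x_sorted f (2 ^ k)" "d \<le> k" "r < 2 ^ d"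
  shows "residue_vertex f k d r \<in> tree_vertices (f ` {..<2 ^ k})"
  unfolding tree_vertices_eq[OF assms(1)] using assms(2,3) by blast

lemma bit_iff_pow_le:
  fixes r :: nat
  assumes "r < 2 ^ Suc d"
  shows "bit r d \<longleftrightarrow> 2 ^ d \<le> r"
proof -
  have "r div 2 ^ d < 2" using assms by (simp add: div_less_iff_less_mult mult.commute)
  then have "r div 2 ^ d = 0 \<or> r div 2 ^ d = 1" by linarith
  moreover have "r div 2 ^ d = 0 \<longleftrightarrow> r < 2 ^ d" by (simp add: div_eq_0_iff)
  ultimately show ?thesis by (auto simp: bit_iff_odd)
qed

lemma is_left_child_residue_vertex_iff:
  assumes f: "x_sorted f (2 ^ k)" and "d < k" "r < 2 ^ Suc d"
  shows "is_left_child (f ` {..<2 ^ k}) (residue_vertex f k (Suc d) r) \<longleftrightarrow> \<not> bit r d"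
proof
  assume "is_left_child (f ` {..<2 ^ k}) (residue_vertex f k (Suc d) r)"
  then obtain R where R: "R \<in> tree_vertices (f ` {..<2 ^ k})" "2 \<le> card R"
    and eq: "residue_vertex f k (Suc d) r = evens R"
    unfolding is_left_child_def by blast
  obtain d' r' where "d' < k" "r' < 2 ^ d'" "R = residue_vertex f k d' r'"
    using tree_vertex_with_children[OF f R] .
  with eq have "residue_vertex f k (Suc d) r = residue_vertex f k (Suc d') r'"
    using evens_residue_vertex[OF f] by simp
  moreover have "Suc d \<le> k" "Suc d' \<le> k" "r' < 2 ^ Suc d'"
    using assms \<open>d' < k\<close> \<open>r' < 2 ^ d'\<close> by simp_all
  ultimately have "d = d'" "r = r'"
    using residue_vertex_inj[OF f _ assms(3)] by blast+
  then show "\<not> bit r d" using \<open>r' < 2 ^ d'\<close> assms(3) bit_iff_pow_le by simp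
next
  assume "\<not> bit r d"
  then have r: "r < 2 ^ d" using bit_iff_pow_le[OF assms(3)] by simp
  then have "residue_vertex f k d r \<in> tree_vertices (f ` {..<2 ^ k})"
    "2 \<le> card (residue_vertex f k d r)"
    using assms(2) r residue_vertex_in_tree_vertices[OF f] two_le_card_residue_vertex_iff[OF f]
    by simp_all
  moreover have "evens (residue_vertex f k d r) = residue_vertex f k (Suc d) r"
    using evens_residue_vertex[OF f assms(2) r] .
  ultimately show "is_left_child (f ` {..<2 ^ k}) (residue_vertex f k (Suc d) r)"
    unfolding is_left_child_def by blast
qed

lemma is_right_child_residue_vertex_iff:
  assumes f: "x_sorted f (2 ^ k)" and "d < k" "r < 2 ^ Suc d"
  shows "is_right_child (f ` {..<2 ^ k}) (residue_vertex f k (Suc d) r) \<longleftrightarrow> bit r d"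
proof
  assume "is_right_child (f ` {..<2 ^ k}) (residue_vertex f k (Suc d) r)"
  then obtain R where R: "R \<in> tree_vertices (f ` {..<2 ^ k})" "2 \<le> card R"
    and eq: "residue_vertex f k (Suc d) r = odds R"
    unfolding is_right_child_def by blast
  obtain d' r' where "d' < k" "r' < 2 ^ d'" "R = residue_vertex f k d' r'"
    using tree_vertex_with_children[OF f R] .
  with eq have "residue_vertex f k (Suc d) r = residue_vertex f k (Suc d') (r' + 2 ^ d')"
    using odds_residue_vertex[OF f] by simp
  moreover have "Suc d \<le> k" "Suc d' \<le> k" "r' + 2 ^ d' < 2 ^ Suc d'"
    using assms \<open>d' < k\<close> \<open>r' < 2 ^ d'\<close> by simp_all
  ultimately have "d = d'" "r = r' + 2 ^ d'"
    using residue_vertex_inj[OF f _ assms(3)] by blast+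
  then show "bit r d" using assms(3) bit_iff_pow_le by simp
next
  assume "bit r d"
  then have r: "r = (r - 2 ^ d) + 2 ^ d" "r - 2 ^ d < 2 ^ d"
    using bit_iff_pow_le[OF assms(3)] assms(3) by simp_all
  then have "residue_vertex f k d (r - 2 ^ d) \<in> tree_vertices (f ` {..<2 ^ k})"
    "2 \<le> card (residue_vertex f k d (r - 2 ^ d))"
    using assms(2) r(2) residue_vertex_in_tree_vertices[OF f] two_le_card_residue_vertex_iff[OF f]
    by simp_all
  moreover have "odds (residue_vertex f k d (r - 2 ^ d)) = residue_vertex f k (Suc d) r"
    using odds_residue_vertex[OF f assms(2) r(2)] r(1) by simp
  ultimately show "is_right_child (f ` {..<2 ^ k}) (residue_vertex f k (Suc d) r)"
    unfolding is_right_child_def by blast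
qed

lemma S_vertex_residue_vertex:
  assumes f: "x_sorted f (2 ^ k)" and "Suc d < k" "r < 2 ^ Suc d"
  shows "S_vertex (f ` {..<2 ^ k}) (residue_vertex f k (Suc d) r)
    = residue_vertex f k (Suc (Suc d)) (if bit r d then r else r + 2 ^ Suc d)"
  using is_left_child_residue_vertex_iff[OF f _ assms(3)] assms
    evens_residue_vertex[OF f assms(2,3)] odds_residue_vertex[OF f assms(2,3)]
  unfolding S_vertex_def by auto

lemma tree_level_eq:
  assumes f: "x_sorted f (2 ^ k)"
  shows "tree_level (f ` {..<2 ^ k}) l
    = {residue_vertex f k (k - l) r | r. l \<le> k \<and> r < 2 ^ (k - l)}"
proof -
  have "card (residue_vertex f k d r) = 2 ^ l \<longleftrightarrow> l \<le> k \<and> d = k - l"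
    if "d \<le> k" "r < 2 ^ d" for d r
    using card_residue_vertex[OF f that] that by auto
  then show ?thesis unfolding tree_level_def tree_vertices_eq[OF f] by fastforce
qed

lemma Union_residue_vertices:
  "\<Union>{residue_vertex f k d r | r. r < 2 ^ d \<and> R r}
    = f ` {j. j < 2 ^ k \<and> R (j mod 2 ^ d)}"
proof (intro equalityI subsetI)
  fix x assume "x \<in> f ` {j. j < 2 ^ k \<and> R (j mod 2 ^ d)}"
  then obtain j where "x = f j" "j < 2 ^ k" "R (j mod 2 ^ d)" by blast
  then show "x \<in> \<Union>{residue_vertex f k d r | r. r < 2 ^ d \<and> R r}"
    by (intro UnionI[of "residue_vertex f k d (j mod 2 ^ d)"]) (auto simp: residue_vertex_def)
qed (auto simp: residue_vertex_def)

lemma remove_level_children: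
  assumes f: "x_sorted f (2 ^ Suc m)" and "e < m"
    and child: "\<And>r. r < 2 ^ Suc e
      \<Longrightarrow> C (residue_vertex f (Suc m) (Suc e) r) \<longleftrightarrow> bit r e \<noteq> b"
  shows "f ` {..<2 ^ Suc m} - \<Union>{Q \<in> tree_level (f ` {..<2 ^ Suc m}) (m - e). C Q}
    = (\<lambda>j. f (insert_bit e b j)) ` {..<2 ^ m}"
proof -
  have "Suc m - (m - e) = Suc e" using assms(2) by simp
  then have "{Q \<in> tree_level (f ` {..<2 ^ Suc m}) (m - e). C Q}
      = {residue_vertex f (Suc m) (Suc e) r | r. r < 2 ^ Suc e \<and> bit r e \<noteq> b}"
    unfolding tree_level_eq[OF f] using child by auto
  then have "\<Union>{Q \<in> tree_level (f ` {..<2 ^ Suc m}) (m - e). C Q}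
      = f ` {j. j < 2 ^ Suc m \<and> bit (j mod 2 ^ Suc e) e \<noteq> b}"
    by (simp only: Union_residue_vertices)
  also have "\<dots> = f ` {j. j < 2 ^ Suc m \<and> bit j e \<noteq> b}"
    using bit_take_bit_iff[of "Suc e" "_ :: nat" e] by (simp add: take_bit_eq_mod)
  moreover have "f ` {..<2 ^ Suc m} - f ` {j. j < 2 ^ Suc m \<and> bit j e \<noteq> b}
      = f ` {j. j < 2 ^ Suc m \<and> bit j e = b}"
    by (subst inj_on_image_set_diff[symmetric, OF x_sorted_inj_on[OF f]]) auto
  ultimately show ?thesis
    using insert_bit_image[OF assms(2), of b] by (metis image_image)
qed

lemma prune_left_eq:
  assumes f: "x_sorted f (2 ^ Suc m)" and "1 \<le> l" "l \<le> m"
  shows "prune_left (f ` {..<2 ^ Suc m}) l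
    = (\<lambda>j. f (insert_bit (m - l) True j)) ` {..<2 ^ m}"
proof -
  have "m - (m - l) = l" "m - l < m" using assms(2,3) by simp_all
  then show ?thesis
    using remove_level_children[OF f \<open>m - l < m\<close>, of "is_left_child (f ` {..<2 ^ Suc m})"]
      is_left_child_residue_vertex_iff[OF f] unfolding prune_left_def by simp
qed

lemma prune_right_eq:
  assumes f: "x_sorted f (2 ^ Suc m)" and "1 \<le> l" "l \<le> m"
  shows "prune_right (f ` {..<2 ^ Suc m}) l
    = (\<lambda>j. f (insert_bit (m - l) False j)) ` {..<2 ^ m}"
proof -
  have "m - (m - l) = l" "m - l < m" using assms(2,3) by simp_all
  then show ?thesis
    using remove_level_children[OF f \<open>m - l < m\<close>, of "is_right_child (f ` {..<2 ^ Suc m})"]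
      is_right_child_residue_vertex_iff[OF f] unfolding prune_right_def by simp
qed

lemma residue_vertex_insert_bit_subset:
  assumes "d \<le> e" "e < m"
  shows "residue_vertex (\<lambda>j. f (insert_bit e b j)) m d r \<subseteq> residue_vertex f (Suc m) d r"
  unfolding residue_vertex_def using insert_bit_less[OF _ assms(2)] insert_bit_mod[OF assms(1)]
  by auto

lemma pruned_tree_vertex_subset:
  assumes f: "x_sorted f (2 ^ Suc m)" and "e < m"
    and g: "g = (\<lambda>j. f (insert_bit e b j))"
    and "m - e < l" and Q': "Q' \<in> tree_level (g ` {..<2 ^ m}) l"
  shows "\<exists>Q \<in> tree_level (f ` {..<2 ^ Suc m}) (l + 1). Q' \<subseteq> Q \<and>
    (Q' \<noteq> g ` {..<2 ^ m} \<and> card Q' > 2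
       \<longrightarrow> S_vertex (g ` {..<2 ^ m}) Q' \<subseteq> S_vertex (f ` {..<2 ^ Suc m}) Q)"
proof -
  have g_sorted: "x_sorted g (2 ^ m)"
    unfolding g using f assms(2) by (rule x_sorted_insert_bit)
  define d where "d = m - l"
  obtain r where "l \<le> m" "r < 2 ^ d" and Q'_eq: "Q' = residue_vertex g m d r"
    using Q' unfolding tree_level_eq[OF g_sorted] d_def by blast
  have "d < e" using \<open>m - e < l\<close> \<open>l \<le> m\<close> unfolding d_def by simp
  define Q where "Q = residue_vertex f (Suc m) d r"
  have "Q \<in> tree_level (f ` {..<2 ^ Suc m}) (l + 1)"
    unfolding tree_level_eq[OF f] Q_def d_def using \<open>l \<le> m\<close> \<open>r < 2 ^ d\<close> d_def by auto
  moreover have "Q' \<subseteq> Q"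
    unfolding Q'_eq Q_def g
    by (rule residue_vertex_insert_bit_subset) (use \<open>d < e\<close> assms(2) in simp_all)
  moreover have "S_vertex (g ` {..<2 ^ m}) Q' \<subseteq> S_vertex (f ` {..<2 ^ Suc m}) Q"
    if "Q' \<noteq> g ` {..<2 ^ m}" "card Q' > 2"
  proof -
    have "d \<noteq> 0"
      using that(1) \<open>r < 2 ^ d\<close> residue_vertex_0[of g m] unfolding Q'_eq by auto
    then obtain d' where d': "d = Suc d'" using not0_implies_Suc by blast
    have "2 < (2::nat) ^ (m - d)"
      using that(2) card_residue_vertex[OF g_sorted _ \<open>r < 2 ^ d\<close>] \<open>l \<le> m\<close>
      unfolding Q'_eq d_def by simp
    then have "Suc d' < m" using d' by (cases "m - d") auto
    then show ?thesis
      unfolding Q'_eq Q_def d'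
      using S_vertex_residue_vertex[OF g_sorted, of d' r] S_vertex_residue_vertex[OF f, of d' r]
        residue_vertex_insert_bit_subset[of "Suc (Suc d')" e m f b]
        \<open>r < 2 ^ d\<close> d' \<open>d < e\<close> assms(2)
      unfolding g by simp
  qed
  ultimately show ?thesis by blast
qed

theorem lemma4:
  fixes P P' :: "(int \<times> int) set" and k l :: nat
  assumes iso: "isothetic_horton k P"
    and l1: "1 \<le> l" and l2: "l \<le> k - 1"
    and prune: "P' = prune_left P l \<or> P' = prune_right P l"
  shows "isothetic_horton (k - 1) P' \<and>
    (l \<le> k - 3 \<longrightarrow>
      (\<forall>l' Q'. l < l' \<longrightarrow> Q' \<in> tree_level P' l' \<longrightarrow>
         (\<exists>Q \<in> tree_level P (l' + 1). Q' \<subseteq> Q \<and>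
            (Q' \<noteq> P' \<and> card Q' > 2 \<longrightarrow> S_vertex P' Q' \<subseteq> S_vertex P Q))))"
proof -
  obtain m where k: "k = Suc m" and "l \<le> m" using l1 l2 by (cases k) auto
  have P: "horton (Suc m) P" using iso k unfolding isothetic_horton_def by simp
  then have "finite P" "inj_on fst P" "card P = 2 ^ Suc m" by simp_all
  then obtain f where f: "x_sorted f (2 ^ Suc m)" and P_eq: "P = f ` {..<2 ^ Suc m}"
    using obtain_x_sorted_enumeration by metis
  define e where "e = m - l"
  have "e < m" "m - e = l" using l1 \<open>l \<le> m\<close> unfolding e_def by simp_all
  obtain b where P': "P' = (\<lambda>j. f (insert_bit e b j)) ` {..<2 ^ m}"
    using prune prune_left_eq[OF f l1 \<open>l \<le> m\<close>] prune_right_eq[OF f l1 \<open>l \<le> m\<close>]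
    unfolding P_eq e_def by blast
  have "isothetic_horton (k - 1) P'"
    unfolding isothetic_horton_def P' k
    using horton_insert_bit[OF _ f \<open>e < m\<close>] P P_eq by simp
  moreover have "\<exists>Q \<in> tree_level P (l' + 1). Q' \<subseteq> Q \<and>
      (Q' \<noteq> P' \<and> card Q' > 2 \<longrightarrow> S_vertex P' Q' \<subseteq> S_vertex P Q)"
    if "l < l'" "Q' \<in> tree_level P' l'" for l' Q'
    using pruned_tree_vertex_subset[OF f \<open>e < m\<close> refl] that \<open>m - e = l\<close>
    unfolding P' P_eq by simp
  ultimately show ?thesis by blast
qed

end
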